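(* Let $N\ge1$ be an integer, $c\neq0$ a constant, and $c_{ij}$, $p_i,q_j,\xi_{i0},\eta_{j0}$ ($1\le i,j\le N$) arbitrary real or complex constants with $p_i+q_j\neq0$ and $q_j\neq 0$. Put $\xi_i=p_ix_1+p_i^{-1}x_{-1}+\xi_{i0}$, $\eta_j=q_jx_1+q_j^{-1}x_{-1}+\eta_{j0}$ and $$\tau_{n,m}(x_{-1},x_1)=\det\Big(c_{ij}+\frac{1}{p_i+q_j}\Big(-\frac{p_i}{q_j}\Big)^n\Big(\frac{1-cp_i}{1+cq_j}\Big)^m e^{\xi_i+\eta_j}\Big)_{1\le i,j\le N}.$$ Then for all integers $n,m$, $\big(\tfrac12 D_{x_{-1}}D_{x_1}-1\big)\tau_{n,m}\cdot\tau_{n,m}=-\tau_{n+1,m}\tau_{n-1,m}$, $\big(c^{-1}D_{x_{-1}}-1\big)\tau_{n,m}\cdot\tau_{n,m+1}+\tau_{n+1,m}\tau_{n-1,m+1}=0$, and $\big(cD_{x_1}-1\big)\tau_{n+1,m}\cdot\tau_{n,m+1}+\tau_{n,m}\tau_{n+1,m+1}=0$.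
   Context: Hirota bilinear operators: $D_x^{k}D_y^{l}\,a\cdot b=(\partial_x-\partial_{x'})^{k}(\partial_y-\partial_{y'})^{l}a(x,y)b(x',y')\big|_{x'=x,\,y'=y}$; a constant term "$-1$" acts as $-ab$. *)

theory Defs
  imports "HOL-Analysis.Analysis"
begin

text \<open>Functions of the two real independent variables (x_{-1}, x_1), complex-valued.
  pdm: partial derivative in x_{-1} (first argument), pdp: partial derivative in x_1.\<close>

definition pdm :: "(real \<Rightarrow> real \<Rightarrow> complex) \<Rightarrow> real \<Rightarrow> real \<Rightarrow> complex" where
  "pdm f = (\<lambda>xm xp. vector_derivative (\<lambda>t. f t xp) (at xm))"

definition pdp :: "(real \<Rightarrow> real \<Rightarrow> complex) \<Rightarrow> real \<Rightarrow> real \<Rightarrow> complex" where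
  "pdp f = (\<lambda>xm xp. vector_derivative (\<lambda>t. f xm t) (at xp))"

definition hirota_Dm :: "(real \<Rightarrow> real \<Rightarrow> complex) \<Rightarrow> (real \<Rightarrow> real \<Rightarrow> complex) \<Rightarrow> real \<Rightarrow> real \<Rightarrow> complex" where
  "hirota_Dm a b = (\<lambda>xm xp. pdm a xm xp * b xm xp - a xm xp * pdm b xm xp)"

definition hirota_Dp :: "(real \<Rightarrow> real \<Rightarrow> complex) \<Rightarrow> (real \<Rightarrow> real \<Rightarrow> complex) \<Rightarrow> real \<Rightarrow> real \<Rightarrow> complex" where
  "hirota_Dp a b = (\<lambda>xm xp. pdp a xm xp * b xm xp - a xm xp * pdp b xm xp)"

definition hirota_DmDp :: "(real \<Rightarrow> real \<Rightarrow> complex) \<Rightarrow> (real \<Rightarrow> real \<Rightarrow> complex) \<Rightarrow> real \<Rightarrow> real \<Rightarrow> complex" where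
  "hirota_DmDp a b = (\<lambda>xm xp.
      pdp (pdm a) xm xp * b xm xp - pdm a xm xp * pdp b xm xp
    - pdp a xm xp * pdm b xm xp + a xm xp * pdp (pdm b) xm xp)"

definition tau :: "complex \<Rightarrow> ('n::finite \<Rightarrow> 'n \<Rightarrow> complex) \<Rightarrow> ('n \<Rightarrow> complex) \<Rightarrow> ('n \<Rightarrow> complex)
    \<Rightarrow> ('n \<Rightarrow> complex) \<Rightarrow> ('n \<Rightarrow> complex) \<Rightarrow> int \<Rightarrow> int \<Rightarrow> real \<Rightarrow> real \<Rightarrow> complex" where
  "tau c cc p q xi0 eta0 n m xm xp =
     det (\<chi> i j. cc i j + (1 / (p i + q j)) * (- p i / q j) powi n
            * ((1 - c * p i) / (1 + c * q j)) powi m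
            * exp ((p i * of_real xp + of_real xm / p i + xi0 i)
                 + (q j * of_real xp + of_real xm / q j + eta0 j)))"

end

theory Submission
  imports Defs "HOL-Computational_Algebra.Polynomial"
begin

text \<open>Write \<open>\<tau>\<^sub>n\<^sub>,\<^sub>m = det (c\<^sub>i\<^sub>j + \<phi>\<^sub>i \<psi>\<^sub>j / (p\<^sub>i + q\<^sub>j))\<close> with
  \<open>\<phi>\<^sub>i = (-p\<^sub>i)\<^sup>n (1 - c p\<^sub>i)\<^sup>m exp \<xi>\<^sub>i\<close> and \<open>\<psi>\<^sub>j = q\<^sub>j\<^sup>-\<^sup>n (1 + c q\<^sub>j)\<^sup>-\<^sup>m exp \<eta>\<^sub>j\<close>. A shift of \<open>n\<close> or \<open>m\<close>
  multiplies \<open>\<phi>\<^sub>i \<psi>\<^sub>j\<close> by a factor \<open>1 - (p\<^sub>i + q\<^sub>j) \<gamma>\<^sub>i\<^sub>j\<close> with \<open>\<gamma>\<close> of rank one or two, and the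
  derivatives of the entries in \<open>x\<^sub>-\<^sub>1\<close> and \<open>x\<^sub>1\<close> are rank-one matrices. So every tau function and
  derivative occurring in the three equations is the determinant, or a cofactor form \<open>u\<^sup>T cof(M) v\<close>,
  of a perturbation of rank at most two of one matrix \<open>M\<close>. The Desnanot--Jacobi identity, proved for
  nonsingular \<open>M\<close> and extended by density, expresses all of them as polynomials in \<open>det M\<close> and
  finitely many cofactor forms of \<open>M\<close>, and the three bilinear equations become polynomial identities.\<close>

section \<open>Row operations on determinants\<close>

text \<open>Matrices are functions \<open>'n \<Rightarrow> 'n \<Rightarrow> 'a\<close>, so \<open>M(k := v)\<close> replaces row \<open>k\<close> by \<open>v\<close>.\<close>

definition det_fun :: "('n::finite \<Rightarrow> 'n \<Rightarrow> 'a::comm_ring_1) \<Rightarrow> 'a" where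
  "det_fun M = det (\<chi> i j. M i j)"

lemma vec_lambda_fun_upd:
  "(\<chi> i j. (M(k := v)) i j) = (\<chi> i. if i = k then (\<chi> j. v j) else (\<chi> j. M i j))"
  by (simp add: vec_eq_iff)

lemma det_fun_upd_sum:
  assumes "finite S"
  shows "det_fun (M(k := (\<lambda>j. \<Sum>s\<in>S. f s j))) = (\<Sum>s\<in>S. det_fun (M(k := f s)))"
proof -
  have "(\<chi> j. \<Sum>s\<in>S. f s j) = (\<Sum>s\<in>S. \<chi> j. f s j)"
    by (simp add: vec_eq_iff sum_component)
  then show ?thesis
    unfolding det_fun_def vec_lambda_fun_upd by (simp only: det_linear_row_sum[OF assms])
qed

lemma det_fun_upd_add:
  "det_fun (M(k := (\<lambda>j. a j + b j))) = det_fun (M(k := a)) + det_fun (M(k := b))"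
proof -
  have "(\<chi> j. a j + b j) = (\<chi> j. a j) + (\<chi> j. b j)"
    by (simp add: vec_eq_iff)
  then show ?thesis
    unfolding det_fun_def vec_lambda_fun_upd by (simp only: det_row_add)
qed

lemma det_fun_upd_scale:
  "det_fun (M(k := (\<lambda>j. r * v j))) = r * det_fun (M(k := v))"
proof -
  have "(\<chi> j. r * v j) = r *s (\<chi> j. v j)"
    by (simp add: vec_eq_iff)
  then show ?thesis
    unfolding det_fun_def vec_lambda_fun_upd by (simp only: det_row_mul)
qed

lemma det_fun_identical_rows:
  assumes "k \<noteq> l" "M k = M l"
  shows "det_fun M = 0"
  unfolding det_fun_def
  by (rule det_identical_rows[OF assms(1)]) (simp add: row_def vec_eq_iff assms(2))

lemma det_fun_upd_other_row:
  assumes "i \<noteq> k"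
  shows "det_fun (M(k := M i)) = 0"
  using assms by (intro det_fun_identical_rows[of i k]) auto

lemma sum_UNIV_eq_single:
  fixes f :: "'n::finite \<Rightarrow> 'a::comm_monoid_add"
  assumes "\<And>i. i \<noteq> k \<Longrightarrow> f i = 0"
  shows "(\<Sum>i\<in>UNIV. f i) = f k"
  using assms by (subst sum.mono_neutral_right[of UNIV "{k}"]) auto

lemma det_fun_upd_row_combination:
  "det_fun (M(k := (\<lambda>j. \<Sum>i\<in>UNIV. y i * M i j))) = y k * det_fun M"
proof -
  have "det_fun (M(k := (\<lambda>j. \<Sum>i\<in>UNIV. y i * M i j))) = (\<Sum>i\<in>UNIV. y i * det_fun (M(k := M i)))"
    by (simp add: det_fun_upd_sum det_fun_upd_scale)
  also have "\<dots> = y k * det_fun (M(k := M k))"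
    by (rule sum_UNIV_eq_single) (simp add: det_fun_upd_other_row)
  finally show ?thesis
    by simp
qed

lemma det_fun_swap_rows:
  assumes "k \<noteq> l"
  shows "det_fun (M(k := M l, l := M k)) = - det_fun M"
proof -
  let ?t = "Transposition.transpose k l"
  have "?t permutes UNIV"
    by (rule permutes_swap_id) auto
  moreover have "(\<chi> i j. (M(k := M l, l := M k)) i j) = (\<chi> i. (\<chi> i j. M i j) $ ?t i)"
    using assms by (auto simp: vec_eq_iff Transposition.transpose_def)
  ultimately show ?thesis
    using assms by (simp only: det_fun_def det_permute_rows sign_swap_id) simp
qed

lemma det_fun_upd_two_row_combinations:
  assumes "k \<noteq> l"
  shows "det_fun (M(k := (\<lambda>j. \<Sum>i\<in>UNIV. y i * M i j), l := (\<lambda>j. \<Sum>i\<in>UNIV. z i * M i j)))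
    = (y k * z l - y l * z k) * det_fun M"
proof -
  let ?Y = "\<lambda>j. \<Sum>i\<in>UNIV. y i * M i j"
  have row_l: "det_fun ((M(k := ?Y))(l := M i)) = 0" if "i \<noteq> k" "i \<noteq> l" for i
    using det_fun_upd_other_row[of i l "M(k := ?Y)"] that by simp
  have row_k: "det_fun (M(k := M i, l := M k)) = 0" if "i \<noteq> l" for i
    using that assms by (intro det_fun_identical_rows[of "if i = k then l else i" k]) auto
  have "det_fun ((M(k := ?Y))(l := M k)) = (\<Sum>i\<in>UNIV. y i * det_fun (M(k := M i, l := M k)))"
    using assms by (simp add: fun_upd_twist det_fun_upd_sum det_fun_upd_scale)
  also have "\<dots> = - y l * det_fun M"
    using assms by (subst sum_UNIV_eq_single[where k = l]) (simp_all add: row_k fun_upd_twist det_fun_swap_rows)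
  finally have swapped: "det_fun ((M(k := ?Y))(l := M k)) = - y l * det_fun M" .
  have "det_fun (M(k := ?Y, l := (\<lambda>j. \<Sum>i\<in>UNIV. z i * M i j)))
      = (\<Sum>i\<in>UNIV. z i * det_fun ((M(k := ?Y))(l := M i)))"
    by (simp add: det_fun_upd_sum det_fun_upd_scale)
  also have "\<dots> = (\<Sum>i\<in>{k, l}. z i * det_fun ((M(k := ?Y))(l := M i)))"
    by (rule sum.mono_neutral_right) (auto simp: row_l)
  also have "\<dots> = z k * det_fun ((M(k := ?Y))(l := M k)) + z l * det_fun ((M(k := ?Y))(l := M l))"
    using assms by simp
  also have "det_fun ((M(k := ?Y))(l := M l)) = y k * det_fun M"
    using assms by (simp add: fun_upd_twist det_fun_upd_row_combination)
  also note swapped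
  also have "z k * (- y l * det_fun M) + z l * (y k * det_fun M) = (y k * z l - y l * z k) * det_fun M"
    by (simp add: algebra_simps)
  finally show ?thesis .
qed

section \<open>The Desnanot--Jacobi identity\<close>

lemma det_fun_nonzero_row_combination:
  fixes M :: "'n::finite \<Rightarrow> 'n \<Rightarrow> 'a::field"
  assumes "det_fun M \<noteq> 0"
  obtains y where "v = (\<lambda>j. \<Sum>i\<in>UNIV. y i * M i j)"
proof -
  let ?A = "transpose (\<chi> i j. M i j)"
  have "det ?A \<noteq> 0"
    using assms by (simp add: det_fun_def)
  then obtain x where "?A *v x = (\<chi> j. v j)"
    using cramer by blast
  then have "v = (\<lambda>j. \<Sum>i\<in>UNIV. x $ i * M i j)"
    by (auto simp: vec_eq_iff matrix_vector_mult_def transpose_def mult.commute)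
  then show ?thesis
    using that by blast
qed

lemma Desnanot_Jacobi_nonsingular:
  fixes M :: "'n::finite \<Rightarrow> 'n \<Rightarrow> 'a::field"
  assumes "det_fun M \<noteq> 0" "k \<noteq> l"
  shows "det_fun M * det_fun (M(k := v, l := w))
    = det_fun (M(k := v)) * det_fun (M(l := w)) - det_fun (M(k := w)) * det_fun (M(l := v))"
proof -
  obtain y where y: "v = (\<lambda>j. \<Sum>i\<in>UNIV. y i * M i j)"
    using det_fun_nonzero_row_combination[OF assms(1)] .
  obtain z where z: "w = (\<lambda>j. \<Sum>i\<in>UNIV. z i * M i j)"
    using det_fun_nonzero_row_combination[OF assms(1)] .
  show ?thesis
    unfolding y z det_fun_upd_two_row_combinations[OF assms(2)] det_fun_upd_row_combination
    by (simp add: algebra_simps)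
qed

lemma finite_det_fun_diagonal_shift_roots:
  fixes M :: "'n::finite \<Rightarrow> 'n \<Rightarrow> 'a::idom"
  shows "finite {t. det_fun (\<lambda>i j. M i j + (if i = j then t else 0)) = 0}"
proof -
  let ?S = "{\<sigma>. \<sigma> permutes (UNIV::'n set)}"
  let ?n = "CARD('n)"
  define Q where "Q \<sigma> = (\<Prod>i\<in>UNIV. [: M i (\<sigma> i), if \<sigma> i = i then 1 else 0 :])" for \<sigma> :: "'n \<Rightarrow> 'n"
  define P where "P = (\<Sum>\<sigma>\<in>?S. smult (of_int (sign \<sigma>)) (Q \<sigma>))"
  have poly_P: "poly P t = det_fun (\<lambda>i j. M i j + (if i = j then t else 0))" for t
    unfolding P_def Q_def det_fun_def det_def poly_sum poly_smult poly_prod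
    by (intro sum.cong refl arg_cong2[where f = "(*)"] prod.cong) auto
  have "coeff (Q id) ?n = 1"
  proof -
    have "degree (Q id) = ?n"
      unfolding Q_def by (simp add: degree_prod_eq_sum_degree)
    moreover have "lead_coeff (Q id) = 1"
      unfolding Q_def by (simp add: lead_coeff_prod)
    ultimately show ?thesis
      by simp
  qed
  moreover have "coeff (Q \<sigma>) ?n = 0" if non_id: "\<sigma> \<noteq> id" for \<sigma>
  proof -
    obtain i0 where i0: "\<sigma> i0 \<noteq> i0"
      using non_id by (auto simp: fun_eq_iff)
    have "degree (Q \<sigma>) \<le> sum (degree \<circ> (\<lambda>i. [: M i (\<sigma> i), if \<sigma> i = i then 1 else 0 :])) UNIV"
      unfolding Q_def by (rule degree_prod_sum_le) simp
    also have "\<dots> \<le> (\<Sum>i\<in>UNIV. if i = i0 then 0 else 1)"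
      by (intro sum_mono) (auto simp: i0)
    also have "\<dots> = card (UNIV - {i0})"
      by (simp add: sum.If_cases Compl_eq_Diff_UNIV)
    also have "\<dots> < ?n"
      by (simp add: card_Diff_subset)
    finally show ?thesis
      by (simp add: coeff_eq_0)
  qed
  ultimately have "coeff P ?n = 1"
    unfolding P_def coeff_sum coeff_smult
    by (subst sum.remove[of _ id]) (auto intro!: sum.neutral)
  then have "P \<noteq> 0"
    by auto
  then show ?thesis
    using poly_roots_finite[of P] by (simp add: poly_P)
qed

lemma continuous_at_eq_off_finite:
  fixes E :: "'a::{t2_space, perfect_space} \<Rightarrow> 'b::t2_space"
  assumes "continuous (at x) E" "finite Z" "\<And>t. t \<notin> Z \<Longrightarrow> E t = c"
  shows "E x = c"
proof -
  have "eventually (\<lambda>t. t \<notin> Z) (at x)"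
    using islimpt_finite[OF assms(2)] by (simp add: islimpt_iff_eventually)
  then have "(E \<longlongrightarrow> c) (at x)"
    by (rule tendsto_eventually[OF eventually_mono]) (simp add: assms(3))
  with assms(1) show ?thesis
    by (metis continuous_at tendsto_unique at_neq_bot)
qed

lemma continuous_det_fun:
  assumes "\<And>i j. continuous F (\<lambda>t. G t i j)"
  shows "continuous F (\<lambda>t. det_fun (G t) :: 'a::real_normed_field)"
  unfolding det_fun_def det_def by (simp, intro continuous_intros assms)

text \<open>Extended from nonsingular matrices by density: \<open>det (M + t I)\<close> vanishes for finitely many \<open>t\<close>.\<close>

theorem Desnanot_Jacobi:
  fixes M :: "'n::finite \<Rightarrow> 'n \<Rightarrow> 'a::real_normed_field"
  assumes "k \<noteq> l"
  shows "det_fun M * det_fun (M(k := v, l := w))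
    = det_fun (M(k := v)) * det_fun (M(l := w)) - det_fun (M(k := w)) * det_fun (M(l := v))"
proof -
  define N where "N t = (\<lambda>i j. M i j + (if i = j then t else 0))" for t
  define E where "E t = det_fun (N t) * det_fun ((N t)(k := v, l := w))
    - (det_fun ((N t)(k := v)) * det_fun ((N t)(l := w)) - det_fun ((N t)(k := w)) * det_fun ((N t)(l := v)))"
    for t
  have continuous_N: "continuous (at 0) (\<lambda>t. N t i j)" for i j
    unfolding N_def by (cases "i = j") simp_all
  have continuous_upd: "continuous (at 0) (\<lambda>t. ((G t)(r := x)) i j)"
    if "\<And>i j. continuous (at 0) (\<lambda>t. G t i j)" for G :: "'a \<Rightarrow> 'n \<Rightarrow> 'n \<Rightarrow> 'a" and r x i j
    using that by (cases "i = r") auto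
  have "continuous (at 0) E"
    unfolding E_def by (intro continuous_intros continuous_det_fun continuous_upd continuous_N)
  moreover have "finite {t. det_fun (N t) = 0}"
    unfolding N_def by (rule finite_det_fun_diagonal_shift_roots)
  moreover have "E t = 0" if "t \<notin> {t. det_fun (N t) = 0}" for t
    using that Desnanot_Jacobi_nonsingular[OF _ assms, of "N t"] by (simp add: E_def)
  ultimately have "E 0 = 0"
    by (rule continuous_at_eq_off_finite)
  moreover have "N 0 = M"
    by (simp add: N_def)
  ultimately show ?thesis
    by (simp add: E_def)
qed

section \<open>Low-rank updates\<close>

text \<open>\<open>cofactor_form M u v = u\<^sup>T cof(M) v\<close>, expanded along the replaced row.\<close>

definition cofactor_form ::
    "('n::finite \<Rightarrow> 'n \<Rightarrow> 'a::comm_ring_1) \<Rightarrow> ('n \<Rightarrow> 'a) \<Rightarrow> ('n \<Rightarrow> 'a) \<Rightarrow> 'a" where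
  "cofactor_form M u v = (\<Sum>k\<in>UNIV. u k * det_fun (M(k := v)))"

lemma cofactor_form_add_left: "cofactor_form M (\<lambda>i. a i + b i) v = cofactor_form M a v + cofactor_form M b v"
  by (simp add: cofactor_form_def algebra_simps sum.distrib)

lemma cofactor_form_scale_left: "cofactor_form M (\<lambda>i. r * u i) v = r * cofactor_form M u v"
  by (simp add: cofactor_form_def algebra_simps sum_distrib_left)

lemma cofactor_form_minus_left: "cofactor_form M (\<lambda>i. - u i) v = - cofactor_form M u v"
  using cofactor_form_scale_left[of M "-1" u v] by simp

lemma cofactor_form_add_right: "cofactor_form M u (\<lambda>j. a j + b j) = cofactor_form M u a + cofactor_form M u b"
  by (simp add: cofactor_form_def det_fun_upd_add algebra_simps sum.distrib)

lemma cofactor_form_scale_right: "cofactor_form M u (\<lambda>j. r * v j) = r * cofactor_form M u v"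
  by (simp add: cofactor_form_def det_fun_upd_scale algebra_simps sum_distrib_left)

lemma sum_det_fun_upd_rank_one: "(\<Sum>k\<in>UNIV. det_fun (M(k := (\<lambda>j. u k * v j)))) = cofactor_form M u v"
  by (simp add: cofactor_form_def det_fun_upd_scale)

lemma det_fun_rank_one_update_rows:
  assumes "finite S"
  shows "det_fun (\<lambda>i j. if i \<in> S then M i j + u i * v j else M i j)
    = det_fun M + (\<Sum>k\<in>S. u k * det_fun (M(k := v)))"
  using assms
proof (induction S arbitrary: M rule: finite_induct)
  case empty
  then show ?case
    by simp
next
  case (insert a S)
  define upd where "upd N = (\<lambda>i j. if i \<in> S then N i j + u i * v j else N i j)" for N
  have "(\<lambda>i j. if i \<in> insert a S then M i j + u i * v j else M i j) = (upd M)(a := (\<lambda>j. M a j + u a * v j))"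
    using insert.hyps by (auto simp: upd_def fun_eq_iff)
  then have "det_fun (\<lambda>i j. if i \<in> insert a S then M i j + u i * v j else M i j)
      = det_fun ((upd M)(a := M a)) + u a * det_fun ((upd M)(a := v))"
    by (simp only: det_fun_upd_add det_fun_upd_scale)
  also have "(upd M)(a := M a) = upd M"
    using insert.hyps by (auto simp: upd_def fun_eq_iff)
  also have "(upd M)(a := v) = upd (M(a := v))"
    using insert.hyps by (auto simp: upd_def fun_eq_iff)
  also have "det_fun (upd (M(a := v))) = det_fun (M(a := v))"
  proof -
    have "det_fun (M(a := v, k := v)) = 0" if "k \<in> S" for k
      using that insert.hyps by (intro det_fun_identical_rows[of k a]) auto
    then show ?thesis
      unfolding upd_def insert.IH by (simp del: fun_upd_apply)
  qed
  finally show ?case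
    using insert.hyps by (simp add: upd_def insert.IH algebra_simps del: fun_upd_apply)
qed

lemma det_fun_rank_one_update:
  "det_fun (\<lambda>i j. M i j + u i * v j) = det_fun M + cofactor_form M u v"
  using det_fun_rank_one_update_rows[of UNIV M u v] by (simp add: cofactor_form_def)

lemma cofactor_form_rank_one_update_same_right:
  "cofactor_form (\<lambda>i j. M i j + u i * v j) x v = cofactor_form M x v"
proof -
  have "det_fun (\<lambda>i j. M i j + u i * v j) + cofactor_form (\<lambda>i j. M i j + u i * v j) x v
      = det_fun (\<lambda>i j. M i j + (u i + x i) * v j)"
    by (simp add: det_fun_rank_one_update[symmetric] algebra_simps)
  then show ?thesis
    by (simp add: det_fun_rank_one_update cofactor_form_add_left)
qed

lemma det_fun_upd_rank_one_update:
  fixes M :: "'n::finite \<Rightarrow> 'n \<Rightarrow> 'a::real_normed_field"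
  shows "det_fun M * det_fun ((\<lambda>i j. M i j + u' i * v' j)(k := v))
    = det_fun (M(k := v)) * (det_fun M + cofactor_form M u' v') - det_fun (M(k := v')) * cofactor_form M u' v"
proof -
  define u'' where "u'' = u'(k := 0)"
  have upd_eq: "(\<lambda>i j. M i j + u' i * v' j)(k := v) = (\<lambda>i j. (M(k := v)) i j + u'' i * v' j)"
    by (auto simp: u''_def fun_eq_iff)
  then have "det_fun M * det_fun ((\<lambda>i j. M i j + u' i * v' j)(k := v))
      = det_fun M * det_fun (M(k := v)) + (\<Sum>l\<in>UNIV. det_fun M * (u'' l * det_fun (M(k := v, l := v'))))"
    unfolding upd_eq det_fun_rank_one_update cofactor_form_def
    by (simp add: sum_distrib_left algebra_simps del: fun_upd_apply)
  also have "\<dots> = det_fun M * det_fun (M(k := v)) + (\<Sum>l\<in>UNIV. u' l *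
      (det_fun (M(k := v)) * det_fun (M(l := v')) - det_fun (M(k := v')) * det_fun (M(l := v))))"
    by (intro arg_cong2[where f = "(+)"] sum.cong refl) (simp add: u''_def Desnanot_Jacobi)
  finally show ?thesis
    by (simp add: cofactor_form_def sum_distrib_left sum_subtractf algebra_simps)
qed

lemma cofactor_form_rank_one_update:
  fixes M :: "'n::finite \<Rightarrow> 'n \<Rightarrow> 'a::real_normed_field"
  shows "det_fun M * cofactor_form (\<lambda>i j. M i j + u' i * v' j) u v
    = (det_fun M + cofactor_form M u' v') * cofactor_form M u v - cofactor_form M u' v * cofactor_form M u v'"
proof -
  have "det_fun M * cofactor_form (\<lambda>i j. M i j + u' i * v' j) u v
      = (\<Sum>k\<in>UNIV. u k * (det_fun M * det_fun ((\<lambda>i j. M i j + u' i * v' j)(k := v))))"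
    by (simp add: cofactor_form_def sum_distrib_left algebra_simps del: fun_upd_apply)
  also have "\<dots> = (\<Sum>k\<in>UNIV. u k * det_fun (M(k := v)) * (det_fun M + cofactor_form M u' v')
      - u k * det_fun (M(k := v')) * cofactor_form M u' v)"
    by (simp add: det_fun_upd_rank_one_update algebra_simps)
  also have "\<dots> = cofactor_form M u v * (det_fun M + cofactor_form M u' v')
      - cofactor_form M u v' * cofactor_form M u' v"
    by (simp only: sum_subtractf cofactor_form_def[of M u] sum_distrib_right)
  finally show ?thesis
    by (simp add: algebra_simps)
qed

lemma det_fun_rank_two_update:
  fixes M :: "'n::finite \<Rightarrow> 'n \<Rightarrow> 'a::real_normed_field"
  shows "det_fun M * det_fun (\<lambda>i j. M i j + u1 i * v1 j + u2 i * v2 j)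
    = (det_fun M + cofactor_form M u1 v1) * (det_fun M + cofactor_form M u2 v2)
      - cofactor_form M u1 v2 * cofactor_form M u2 v1"
  using det_fun_rank_one_update[of "\<lambda>i j. M i j + u1 i * v1 j" u2 v2]
    cofactor_form_rank_one_update[of M u1 v1 u2 v2]
  by (simp add: det_fun_rank_one_update algebra_simps)

section \<open>Derivatives of determinants\<close>

lemma has_vector_derivative_prod:
  fixes f :: "'i \<Rightarrow> real \<Rightarrow> 'a::real_normed_field"
  assumes "\<And>i. i \<in> I \<Longrightarrow> (f i has_vector_derivative f' i) (at x)"
  shows "((\<lambda>t. \<Prod>i\<in>I. f i t) has_vector_derivative (\<Sum>i\<in>I. f' i * (\<Prod>j\<in>I - {i}. f j x))) (at x)"
proof -
  have "((\<lambda>t. \<Prod>i\<in>I. f i t) has_derivative (\<lambda>y. \<Sum>i\<in>I. (y *\<^sub>R f' i) * (\<Prod>j\<in>I - {i}. f j x))) (at x)"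
    using assms by (intro has_derivative_prod) (auto simp: has_vector_derivative_def)
  then show ?thesis
    by (simp add: has_vector_derivative_def scaleR_sum_right)
qed

lemma has_vector_derivative_det_fun:
  fixes F :: "real \<Rightarrow> 'n::finite \<Rightarrow> 'n \<Rightarrow> 'a::real_normed_field"
  assumes "\<And>i j. ((\<lambda>t. F t i j) has_vector_derivative F' i j) (at x)"
  shows "((\<lambda>t. det_fun (F t)) has_vector_derivative (\<Sum>k\<in>UNIV. det_fun ((F x)(k := F' k)))) (at x)"
proof -
  let ?S = "{\<sigma>. \<sigma> permutes (UNIV :: 'n set)}"
  have det_fun_eq: "det_fun G = (\<Sum>\<sigma>\<in>?S. of_int (sign \<sigma>) * (\<Prod>i\<in>UNIV. G i (\<sigma> i)))" for G
    by (simp add: det_fun_def det_def)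
  have upd_eq: "det_fun ((F x)(k := F' k))
      = (\<Sum>\<sigma>\<in>?S. of_int (sign \<sigma>) * (F' k (\<sigma> k) * (\<Prod>j\<in>UNIV - {k}. F x j (\<sigma> j))))" for k
    unfolding det_fun_eq
    by (intro sum.cong refl arg_cong2[where f = "(*)"])
      (auto simp: prod.remove[of UNIV k] intro!: prod.cong)
  have "((\<lambda>t. \<Sum>\<sigma>\<in>?S. of_int (sign \<sigma>) * (\<Prod>i\<in>UNIV. F t i (\<sigma> i))) has_vector_derivative
      (\<Sum>\<sigma>\<in>?S. of_int (sign \<sigma>) * (\<Sum>i\<in>UNIV. F' i (\<sigma> i) * (\<Prod>j\<in>UNIV - {i}. F x j (\<sigma> j))))) (at x)"
    by (intro has_vector_derivative_sum has_vector_derivative_mult_right has_vector_derivative_prod assms)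
  then show ?thesis
    unfolding det_fun_eq[symmetric] upd_eq sum_distrib_left by (subst sum.swap)
qed

lemma has_vector_derivative_det_fun_rank_one:
  fixes F :: "real \<Rightarrow> 'n::finite \<Rightarrow> 'n \<Rightarrow> 'a::real_normed_field"
  assumes "\<And>i j. ((\<lambda>t. F t i j) has_vector_derivative u i * v j) (at x)"
  shows "((\<lambda>t. det_fun (F t)) has_vector_derivative cofactor_form (F x) u v) (at x)"
  using has_vector_derivative_det_fun[of F "\<lambda>i j. u i * v j", OF assms] by (simp add: sum_det_fun_upd_rank_one)

lemma has_vector_derivative_scaled_exp:
  fixes K A B :: "'a::{real_normed_field, banach}"
  shows "((\<lambda>t::real. K * exp (A + of_real t * B)) has_vector_derivative B * (K * exp (A + of_real x * B))) (at x)"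
proof -
  have "((\<lambda>z. K * exp (A + z * B)) has_field_derivative K * exp (A + of_real x * B) * B) (at (of_real x))"
    by (auto intro!: derivative_eq_intros)
  then show ?thesis
    using has_vector_derivative_real_field by (fastforce simp: mult.commute)
qed

section \<open>The tau function\<close>

locale gram_tau =
  fixes c :: complex and cc :: "'n::finite \<Rightarrow> 'n \<Rightarrow> complex"
    and p q xi0 eta0 :: "'n \<Rightarrow> complex"
  assumes c_nonzero: "c \<noteq> 0"
    and p_plus_q_nonzero: "\<And>i j. p i + q j \<noteq> 0"
    and q_nonzero: "\<And>j. q j \<noteq> 0"
    and p_nonzero: "\<And>i. p i \<noteq> 0"
    and one_minus_cp_nonzero: "\<And>i. 1 - c * p i \<noteq> 0"
    and one_plus_cq_nonzero: "\<And>j. 1 + c * q j \<noteq> 0"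
begin

abbreviation \<tau> :: "int \<Rightarrow> int \<Rightarrow> real \<Rightarrow> real \<Rightarrow> complex" where
  "\<tau> \<equiv> tau c cc p q xi0 eta0"

definition phi :: "int \<Rightarrow> int \<Rightarrow> real \<Rightarrow> real \<Rightarrow> 'n \<Rightarrow> complex" where
  "phi n m xm xp i = (- p i) powi n * (1 - c * p i) powi m * exp (p i * of_real xp + of_real xm / p i + xi0 i)"

definition psi :: "int \<Rightarrow> int \<Rightarrow> real \<Rightarrow> real \<Rightarrow> 'n \<Rightarrow> complex" where
  "psi n m xm xp j = exp (q j * of_real xp + of_real xm / q j + eta0 j) / (q j powi n * (1 + c * q j) powi m)"

definition gram :: "int \<Rightarrow> int \<Rightarrow> real \<Rightarrow> real \<Rightarrow> 'n \<Rightarrow> 'n \<Rightarrow> complex" where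
  "gram n m xm xp i j = cc i j + phi n m xm xp i * psi n m xm xp j / (p i + q j)"

lemma tau_eq_det_fun: "\<tau> n m xm xp = det_fun (gram n m xm xp)"
proof -
  have "1 / (p i + q j) * (- p i / q j) powi n * ((1 - c * p i) / (1 + c * q j)) powi m * (E * F)
      = (- p i) powi n * (1 - c * p i) powi m * E * (F / (q j powi n * (1 + c * q j) powi m)) / (p i + q j)"
    for i j and E F :: complex
  proof -
    have "q j powi n \<noteq> 0" "(1 + c * q j) powi m \<noteq> 0"
      using q_nonzero[of j] one_plus_cq_nonzero[of j] by auto
    then show ?thesis
      by (simp add: power_int_divide_distrib field_simps del: divide_minus_left)
  qed
  then show ?thesis
    unfolding tau_def det_fun_def gram_def phi_def psi_def
    by (simp only: exp_add[of "p _ * of_real xp + of_real xm / p _ + xi0 _"])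
qed

lemma phi_Suc_n: "phi (n + 1) m xm xp i = - p i * phi n m xm xp i"
  using p_nonzero[of i] by (simp add: phi_def power_int_add_1)

lemma psi_Suc_n: "psi (n + 1) m xm xp j = psi n m xm xp j / q j"
  using q_nonzero[of j] one_plus_cq_nonzero[of j] by (simp add: psi_def power_int_add field_simps)

lemma phi_Suc_m: "phi n (m + 1) xm xp i = (1 - c * p i) * phi n m xm xp i"
  using one_minus_cp_nonzero[of i] by (simp add: phi_def power_int_add_1)

lemma psi_Suc_m: "psi n (m + 1) xm xp j = psi n m xm xp j / (1 + c * q j)"
  using q_nonzero[of j] one_plus_cq_nonzero[of j] by (simp add: psi_def power_int_add field_simps)

lemma phi_pred_n: "phi (n - 1) m xm xp i = - phi n m xm xp i / p i"
  using phi_Suc_n[of "n - 1" m xm xp i] p_nonzero[of i] by (simp add: field_simps)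

lemma psi_pred_n: "psi (n - 1) m xm xp j = q j * psi n m xm xp j"
  using psi_Suc_n[of "n - 1" m xm xp j] q_nonzero[of j] by (simp add: field_simps)

lemma phi_has_derivative_xm:
  "((\<lambda>t. phi n m t xp i) has_vector_derivative phi n m xm xp i / p i) (at xm)"
proof -
  have "(\<lambda>t. phi n m t xp i) = (\<lambda>t. (- p i) powi n * (1 - c * p i) powi m
      * exp ((p i * of_real xp + xi0 i) + of_real t * (1 / p i)))"
    by (simp add: phi_def fun_eq_iff algebra_simps)
  then show ?thesis
    by (simp only:) (rule has_vector_derivative_eq_rhs[OF has_vector_derivative_scaled_exp],
        simp add: phi_def algebra_simps)
qed

lemma phi_has_derivative_xp:
  "((\<lambda>t. phi n m xm t i) has_vector_derivative p i * phi n m xm xp i) (at xp)"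
proof -
  have "(\<lambda>t. phi n m xm t i) = (\<lambda>t. (- p i) powi n * (1 - c * p i) powi m
      * exp ((of_real xm / p i + xi0 i) + of_real t * p i))"
    by (simp add: phi_def fun_eq_iff algebra_simps)
  then show ?thesis
    by (simp only:) (rule has_vector_derivative_eq_rhs[OF has_vector_derivative_scaled_exp],
        simp add: phi_def algebra_simps)
qed

lemma psi_has_derivative_xm:
  "((\<lambda>t. psi n m t xp j) has_vector_derivative psi n m xm xp j / q j) (at xm)"
proof -
  have "(\<lambda>t. psi n m t xp j) = (\<lambda>t. inverse (q j powi n * (1 + c * q j) powi m)
      * exp ((q j * of_real xp + eta0 j) + of_real t * (1 / q j)))"
    by (simp add: psi_def fun_eq_iff field_simps)
  then show ?thesis
    by (simp only:) (rule has_vector_derivative_eq_rhs[OF has_vector_derivative_scaled_exp],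
        simp add: psi_def field_simps)
qed

lemma psi_has_derivative_xp:
  "((\<lambda>t. psi n m xm t j) has_vector_derivative q j * psi n m xm xp j) (at xp)"
proof -
  have "(\<lambda>t. psi n m xm t j) = (\<lambda>t. inverse (q j powi n * (1 + c * q j) powi m)
      * exp ((of_real xm / q j + eta0 j) + of_real t * q j))"
    by (simp add: psi_def fun_eq_iff field_simps)
  then show ?thesis
    by (simp only:) (rule has_vector_derivative_eq_rhs[OF has_vector_derivative_scaled_exp],
        simp add: psi_def field_simps)
qed

text \<open>The Cauchy kernel turns a factor \<open>1 - (p\<^sub>i + q\<^sub>j) \<gamma>\<close> of \<open>\<phi>\<^sub>i \<psi>\<^sub>j\<close> into the
  correction \<open>- \<gamma> \<phi>\<^sub>i \<psi>\<^sub>j\<close>.\<close>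

lemma gram_shift:
  assumes "phi n' m' xm xp i * psi n' m' xm xp j
    = (1 - (p i + q j) * \<gamma>) * (phi n m xm xp i * psi n m xm xp j)"
  shows "gram n' m' xm xp i j = gram n m xm xp i j - \<gamma> * (phi n m xm xp i * psi n m xm xp j)"
  unfolding gram_def assms using p_plus_q_nonzero[of i j] by (simp add: field_simps)

lemma gram_Suc_n:
  "gram (n + 1) m xm xp = (\<lambda>i j. gram n m xm xp i j + (- phi n m xm xp i) * (psi n m xm xp j / q j))"
proof (intro ext)
  fix i j
  have shift: "phi (n + 1) m xm xp i * psi (n + 1) m xm xp j
      = (1 - (p i + q j) * (1 / q j)) * (phi n m xm xp i * psi n m xm xp j)"
    unfolding phi_Suc_n psi_Suc_n using q_nonzero[of j] by (simp add: field_simps)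
  show "gram (n + 1) m xm xp i j = gram n m xm xp i j + (- phi n m xm xp i) * (psi n m xm xp j / q j)"
    using gram_shift[OF shift] by simp
qed

lemma gram_pred_n:
  "gram (n - 1) m xm xp = (\<lambda>i j. gram n m xm xp i j + (- (phi n m xm xp i / p i)) * psi n m xm xp j)"
proof (intro ext)
  fix i j
  have shift: "phi (n - 1) m xm xp i * psi (n - 1) m xm xp j
      = (1 - (p i + q j) * (1 / p i)) * (phi n m xm xp i * psi n m xm xp j)"
    unfolding phi_pred_n psi_pred_n using p_nonzero[of i] by (simp add: field_simps)
  show "gram (n - 1) m xm xp i j = gram n m xm xp i j + (- (phi n m xm xp i / p i)) * psi n m xm xp j"
    using gram_shift[OF shift] by (simp add: algebra_simps)
qed

lemma gram_Suc_m:
  "gram n (m + 1) xm xp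
    = (\<lambda>i j. gram n m xm xp i j + (- (c * phi n m xm xp i)) * (psi n m xm xp j / (1 + c * q j)))"
proof (intro ext)
  fix i j
  have shift: "phi n (m + 1) xm xp i * psi n (m + 1) xm xp j
      = (1 - (p i + q j) * (c / (1 + c * q j))) * (phi n m xm xp i * psi n m xm xp j)"
    unfolding phi_Suc_m psi_Suc_m using one_plus_cq_nonzero[of j] by (simp add: field_simps)
  show "gram n (m + 1) xm xp i j
      = gram n m xm xp i j + (- (c * phi n m xm xp i)) * (psi n m xm xp j / (1 + c * q j))"
    using gram_shift[OF shift] by (simp add: algebra_simps)
qed

lemma gram_pred_n_Suc_m:
  "gram (n - 1) (m + 1) xm xp
    = (\<lambda>i j. gram n m xm xp i j + (- (phi n m xm xp i / p i)) * (psi n m xm xp j / (1 + c * q j)))"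
proof (intro ext)
  fix i j
  have "(- (c * a)) * w + (- ((1 - c * p i) * a / p i)) * w = (- (a / p i)) * w" for a w
    using p_nonzero[of i] by (simp add: field_simps)
  then show "gram (n - 1) (m + 1) xm xp i j
      = gram n m xm xp i j + (- (phi n m xm xp i / p i)) * (psi n m xm xp j / (1 + c * q j))"
    by (simp only: gram_pred_n[of n "m + 1"] gram_Suc_m[of n m] phi_Suc_m psi_Suc_m add.assoc)
qed

lemma gram_Suc_n_Suc_m:
  "gram (n + 1) (m + 1) xm xp
    = (\<lambda>i j. gram n m xm xp i j + (- (c * phi n m xm xp i)) * (psi n m xm xp j / (1 + c * q j))
        + (- ((1 - c * p i) * phi n m xm xp i)) * (psi n m xm xp j / (1 + c * q j) / q j))"
  by (simp only: gram_Suc_n[of n "m + 1"] gram_Suc_m[of n m] phi_Suc_m psi_Suc_m)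

lemma gram_has_derivative_xm:
  "((\<lambda>t. gram n m t xp i j) has_vector_derivative
    (phi n m xm xp i / p i) * (psi n m xm xp j / q j)) (at xm)"
proof -
  let ?a = "phi n m xm xp i" and ?b = "psi n m xm xp j"
  have "?a * (?b / q j) + ?a / p i * ?b = (p i + q j) * (?a / p i * (?b / q j))"
    using p_nonzero[of i] q_nonzero[of j] by (simp add: field_simps)
  then have rhs: "0 + (?a * (?b / q j) + ?a / p i * ?b) / (p i + q j) = ?a / p i * (?b / q j)"
    using p_plus_q_nonzero[of i j] by simp
  show ?thesis
    unfolding gram_def
    by (rule has_vector_derivative_eq_rhs[OF has_vector_derivative_add[OF has_vector_derivative_const
      has_vector_derivative_divide[OF has_vector_derivative_mult[OF phi_has_derivative_xm psi_has_derivative_xm]]]])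
      (rule rhs)
qed

lemma gram_has_derivative_xp:
  "((\<lambda>t. gram n m xm t i j) has_vector_derivative phi n m xm xp i * psi n m xm xp j) (at xp)"
  unfolding gram_def
  by (rule has_vector_derivative_eq_rhs, rule has_vector_derivative_add[OF has_vector_derivative_const
      has_vector_derivative_divide[OF has_vector_derivative_mult[OF phi_has_derivative_xp psi_has_derivative_xp]]])
    (use p_plus_q_nonzero[of i j] in \<open>simp add: field_simps\<close>)

lemma pdm_tau:
  "pdm (\<tau> n m) xm xp
    = cofactor_form (gram n m xm xp) (\<lambda>i. phi n m xm xp i / p i) (\<lambda>j. psi n m xm xp j / q j)"
  unfolding pdm_def tau_eq_det_fun
  by (intro vector_derivative_at has_vector_derivative_det_fun_rank_one gram_has_derivative_xm)

lemma pdp_tau: "pdp (\<tau> n m) xm xp = cofactor_form (gram n m xm xp) (phi n m xm xp) (psi n m xm xp)"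
  unfolding pdp_def tau_eq_det_fun
  by (intro vector_derivative_at has_vector_derivative_det_fun_rank_one gram_has_derivative_xp)

text \<open>The subscripts \<open>m\<close> and \<open>p\<close> mark the derivatives of \<open>\<phi>\<close> and \<open>\<psi>\<close> in \<open>x\<^sub>-\<^sub>1\<close> and \<open>x\<^sub>1\<close>;
  \<open>\<omega>\<close> is \<open>\<psi>\<close> at \<open>(n, m + 1)\<close> and \<open>\<omega>\<^sub>m\<close> is \<open>\<psi>\<close> at \<open>(n + 1, m + 1)\<close>.\<close>

context
  fixes n m :: int and xm xp :: real
begin

abbreviation "G \<equiv> gram n m xm xp"
abbreviation "D \<equiv> det_fun G"
abbreviation "A \<equiv> cofactor_form G"
abbreviation "\<phi> \<equiv> phi n m xm xp"
abbreviation "\<psi> \<equiv> psi n m xm xp"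
abbreviation "\<phi>\<^sub>m \<equiv> \<lambda>i. \<phi> i / p i"
abbreviation "\<phi>\<^sub>p \<equiv> \<lambda>i. p i * \<phi> i"
abbreviation "\<psi>\<^sub>m \<equiv> \<lambda>j. \<psi> j / q j"
abbreviation "\<omega> \<equiv> \<lambda>j. \<psi> j / (1 + c * q j)"
abbreviation "\<omega>\<^sub>m \<equiv> \<lambda>j. \<omega> j / q j"

lemma tau_Suc_n: "\<tau> (n + 1) m xm xp = D - A \<phi> \<psi>\<^sub>m"
  unfolding tau_eq_det_fun gram_Suc_n det_fun_rank_one_update cofactor_form_minus_left by simp

lemma tau_pred_n: "\<tau> (n - 1) m xm xp = D - A \<phi>\<^sub>m \<psi>"
  unfolding tau_eq_det_fun gram_pred_n det_fun_rank_one_update cofactor_form_minus_left by simp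

lemma tau_Suc_m: "\<tau> n (m + 1) xm xp = D - c * A \<phi> \<omega>"
  unfolding tau_eq_det_fun gram_Suc_m det_fun_rank_one_update cofactor_form_minus_left
    cofactor_form_scale_left by simp

lemma tau_pred_n_Suc_m: "\<tau> (n - 1) (m + 1) xm xp = D - A \<phi>\<^sub>m \<omega>"
  unfolding tau_eq_det_fun gram_pred_n_Suc_m det_fun_rank_one_update cofactor_form_minus_left by simp

lemma pdp_pdm_tau:
  defines "C \<equiv> \<lambda>i j. G i j + \<phi>\<^sub>m i * \<psi>\<^sub>m j"
  shows "pdp (pdm (\<tau> n m)) xm xp
    = cofactor_form C \<phi> \<psi> + cofactor_form C \<phi> \<psi>\<^sub>m + cofactor_form C \<phi>\<^sub>m \<psi> - A \<phi> \<psi>"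
proof -
  let ?C = "\<lambda>t i j. gram n m xm t i j + phi n m xm t i / p i * (psi n m xm t j / q j)"
  have pdm_eq: "pdm (\<tau> n m) xm = (\<lambda>t. det_fun (?C t) - det_fun (gram n m xm t))"
    by (rule ext) (simp only: pdm_tau det_fun_rank_one_update add_diff_cancel_left')
  have "((\<lambda>t. det_fun (?C t)) has_vector_derivative
      (\<Sum>k\<in>UNIV. det_fun (C(k := (\<lambda>j. \<phi> k * \<psi> j + \<phi> k * \<psi>\<^sub>m j + \<phi>\<^sub>m k * \<psi> j))))) (at xp)"
  proof (unfold C_def, rule has_vector_derivative_det_fun)
    fix i j
    have "p i * \<phi> i / p i = \<phi> i" "q j * \<psi> j / q j = \<psi> j"
      using p_nonzero[of i] q_nonzero[of j] by simp_all
    then show "((\<lambda>t. ?C t i j) has_vector_derivative \<phi> i * \<psi> j + \<phi> i * \<psi>\<^sub>m j + \<phi>\<^sub>m i * \<psi> j) (at xp)"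
      by (intro has_vector_derivative_eq_rhs[OF has_vector_derivative_add[OF gram_has_derivative_xp
          has_vector_derivative_mult[OF has_vector_derivative_divide[OF phi_has_derivative_xp]
            has_vector_derivative_divide[OF psi_has_derivative_xp]]]]) (simp add: algebra_simps)
  qed
  also have "(\<Sum>k\<in>UNIV. det_fun (C(k := (\<lambda>j. \<phi> k * \<psi> j + \<phi> k * \<psi>\<^sub>m j + \<phi>\<^sub>m k * \<psi> j))))
      = cofactor_form C \<phi> \<psi> + cofactor_form C \<phi> \<psi>\<^sub>m + cofactor_form C \<phi>\<^sub>m \<psi>"
    by (simp only: det_fun_upd_add sum.distrib sum_det_fun_upd_rank_one)
  finally have "((\<lambda>t. pdm (\<tau> n m) xm t) has_vector_derivative
      cofactor_form C \<phi> \<psi> + cofactor_form C \<phi> \<psi>\<^sub>m + cofactor_form C \<phi>\<^sub>m \<psi> - A \<phi> \<psi>) (at xp)"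
    unfolding pdm_eq
    by (intro has_vector_derivative_diff has_vector_derivative_det_fun_rank_one gram_has_derivative_xp)
  then show ?thesis
    unfolding pdp_def by (rule vector_derivative_at)
qed

lemma det_mult_pdp_pdm_tau:
  "D * pdp (pdm (\<tau> n m)) xm xp = (D + A \<phi>\<^sub>m \<psi>\<^sub>m) * (A \<phi> \<psi> + A \<phi> \<psi>\<^sub>m + A \<phi>\<^sub>m \<psi>)
    - A \<phi>\<^sub>m \<psi> * A \<phi> \<psi>\<^sub>m - A \<phi>\<^sub>m \<psi>\<^sub>m * A \<phi> \<psi>\<^sub>m - A \<phi>\<^sub>m \<psi> * A \<phi>\<^sub>m \<psi>\<^sub>m - D * A \<phi> \<psi>"
proof -
  have update: "D * cofactor_form (\<lambda>i j. G i j + \<phi>\<^sub>m i * \<psi>\<^sub>m j) u v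
      = (D + A \<phi>\<^sub>m \<psi>\<^sub>m) * A u v - A \<phi>\<^sub>m v * A u \<psi>\<^sub>m" for u v
    by (rule cofactor_form_rank_one_update)
  show ?thesis
    unfolding pdp_pdm_tau right_diff_distrib distrib_left update by (simp add: algebra_simps)
qed

lemma psi_over_q_split: "\<psi>\<^sub>m = (\<lambda>j. c * \<omega> j + \<omega>\<^sub>m j)"
proof
  fix j
  have "c * w + w / q j = w * ((1 + c * q j) / q j)" for w
    using q_nonzero[of j] by (simp add: field_simps)
  then have "c * \<omega> j + \<omega>\<^sub>m j = \<omega> j * ((1 + c * q j) / q j)" .
  also have "\<dots> = \<psi>\<^sub>m j"
    using one_plus_cq_nonzero[of j] by simp
  finally show "\<psi>\<^sub>m j = c * \<omega> j + \<omega>\<^sub>m j" ..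
qed

lemma tau_Suc_n_split: "\<tau> (n + 1) m xm xp = D - (c * A \<phi> \<omega> + A \<phi> \<omega>\<^sub>m)"
  unfolding tau_Suc_n psi_over_q_split cofactor_form_add_right cofactor_form_scale_right ..

lemma pdm_tau_split: "pdm (\<tau> n m) xm xp = c * A \<phi>\<^sub>m \<omega> + A \<phi>\<^sub>m \<omega>\<^sub>m"
  unfolding pdm_tau psi_over_q_split cofactor_form_add_right cofactor_form_scale_right ..

lemma det_mult_pdm_tau_Suc_m:
  "D * pdm (\<tau> n (m + 1)) xm xp = (D - c * A \<phi> \<omega>) * (A \<phi>\<^sub>m \<omega>\<^sub>m - c * A \<phi> \<omega>\<^sub>m)
    + c * A \<phi> \<omega>\<^sub>m * (A \<phi>\<^sub>m \<omega> - c * A \<phi> \<omega>)"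
proof -
  have "(\<lambda>i. (1 - c * p i) * \<phi> i / p i) = (\<lambda>i. \<phi>\<^sub>m i + (- c) * \<phi> i)"
    using p_nonzero by (auto simp: fun_eq_iff field_simps)
  then have "D * pdm (\<tau> n (m + 1)) xm xp
      = D * cofactor_form (\<lambda>i j. G i j + (- (c * \<phi> i)) * \<omega> j) (\<lambda>i. \<phi>\<^sub>m i + (- c) * \<phi> i) \<omega>\<^sub>m"
    unfolding pdm_tau gram_Suc_m phi_Suc_m psi_Suc_m by simp
  also have "\<dots> = (D + A (\<lambda>i. - (c * \<phi> i)) \<omega>) * A (\<lambda>i. \<phi>\<^sub>m i + (- c) * \<phi> i) \<omega>\<^sub>m
      - A (\<lambda>i. - (c * \<phi> i)) \<omega>\<^sub>m * A (\<lambda>i. \<phi>\<^sub>m i + (- c) * \<phi> i) \<omega>"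
    by (rule cofactor_form_rank_one_update)
  finally show ?thesis
    unfolding cofactor_form_minus_left cofactor_form_scale_left cofactor_form_add_left
    by (simp add: algebra_simps)
qed

lemma pdp_tau_Suc_n: "pdp (\<tau> (n + 1) m) xm xp = - (c * A \<phi>\<^sub>p \<omega> + A \<phi>\<^sub>p \<omega>\<^sub>m)"
proof -
  have "phi (n + 1) m xm xp = (\<lambda>i. - \<phi>\<^sub>p i)" "psi (n + 1) m xm xp = \<psi>\<^sub>m"
    by (simp_all add: fun_eq_iff phi_Suc_n psi_Suc_n)
  then have "pdp (\<tau> (n + 1) m) xm xp = cofactor_form (\<lambda>i j. G i j + (- \<phi> i) * \<psi>\<^sub>m j) (\<lambda>i. - \<phi>\<^sub>p i) \<psi>\<^sub>m"
    unfolding pdp_tau gram_Suc_n by simp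
  also have "\<dots> = - A \<phi>\<^sub>p \<psi>\<^sub>m"
    unfolding cofactor_form_rank_one_update_same_right cofactor_form_minus_left ..
  finally show ?thesis
    unfolding psi_over_q_split cofactor_form_add_right cofactor_form_scale_right .
qed

lemma pdp_tau_Suc_m: "pdp (\<tau> n (m + 1)) xm xp = A \<phi> \<omega> - c * A \<phi>\<^sub>p \<omega>"
proof -
  have "phi n (m + 1) xm xp = (\<lambda>i. \<phi> i + (- c) * \<phi>\<^sub>p i)"
    by (rule ext) (simp only: phi_Suc_m, simp add: algebra_simps)
  moreover have "psi n (m + 1) xm xp = \<omega>"
    by (rule ext) (simp add: psi_Suc_m)
  ultimately have "pdp (\<tau> n (m + 1)) xm xp
      = cofactor_form (\<lambda>i j. G i j + (- (c * \<phi> i)) * \<omega> j) (\<lambda>i. \<phi> i + (- c) * \<phi>\<^sub>p i) \<omega>"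
    unfolding pdp_tau gram_Suc_m by simp
  then show ?thesis
    unfolding cofactor_form_rank_one_update_same_right cofactor_form_add_left cofactor_form_scale_left
    by simp
qed

lemma tau_mult_tau_Suc_n_Suc_m:
  "\<tau> n m xm xp * \<tau> (n + 1) (m + 1) xm xp
    = (D - c * A \<phi> \<omega>) * (D - A \<phi> \<omega>\<^sub>m + c * A \<phi>\<^sub>p \<omega>\<^sub>m) - c * A \<phi> \<omega>\<^sub>m * (A \<phi> \<omega> - c * A \<phi>\<^sub>p \<omega>)"
proof -
  have coeff: "(1 - c * p i) * \<phi> i = \<phi> i + (- c) * \<phi>\<^sub>p i" for i
    by (simp add: algebra_simps)
  have "\<tau> n m xm xp * \<tau> (n + 1) (m + 1) xm xp
      = D * det_fun (\<lambda>i j. G i j + (- (c * \<phi> i)) * \<omega> j + (- (\<phi> i + (- c) * \<phi>\<^sub>p i)) * \<omega>\<^sub>m j)"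
    unfolding tau_eq_det_fun gram_Suc_n_Suc_m coeff ..
  also have "\<dots> = (D + A (\<lambda>i. - (c * \<phi> i)) \<omega>) * (D + A (\<lambda>i. - (\<phi> i + (- c) * \<phi>\<^sub>p i)) \<omega>\<^sub>m)
      - A (\<lambda>i. - (c * \<phi> i)) \<omega>\<^sub>m * A (\<lambda>i. - (\<phi> i + (- c) * \<phi>\<^sub>p i)) \<omega>"
    by (rule det_fun_rank_two_update)
  finally show ?thesis
    unfolding cofactor_form_minus_left cofactor_form_scale_left cofactor_form_add_left
    by (simp add: algebra_simps)
qed

lemma tau_bilinear_DmDp:
  "(1/2) * hirota_DmDp (\<tau> n m) (\<tau> n m) xm xp - \<tau> n m xm xp * \<tau> n m xm xp
    = - (\<tau> (n + 1) m xm xp * \<tau> (n - 1) m xm xp)"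
  unfolding hirota_DmDp_def tau_eq_det_fun[of n m xm xp] pdm_tau[of n m xm xp] pdp_tau[of n m xm xp]
    tau_Suc_n tau_pred_n
  using det_mult_pdp_pdm_tau by algebra

lemma tau_bilinear_Dm:
  "(1/c) * hirota_Dm (\<tau> n m) (\<tau> n (m + 1)) xm xp - \<tau> n m xm xp * \<tau> n (m + 1) xm xp
    + \<tau> (n + 1) m xm xp * \<tau> (n - 1) (m + 1) xm xp = 0"
proof -
  have "hirota_Dm (\<tau> n m) (\<tau> n (m + 1)) xm xp
      = c * (\<tau> n m xm xp * \<tau> n (m + 1) xm xp - \<tau> (n + 1) m xm xp * \<tau> (n - 1) (m + 1) xm xp)"
    unfolding hirota_Dm_def tau_Suc_m tau_Suc_n_split tau_pred_n_Suc_m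
      tau_eq_det_fun[of n m xm xp] pdm_tau_split det_mult_pdm_tau_Suc_m
    by (simp add: algebra_simps)
  then show ?thesis
    using c_nonzero by simp
qed

lemma tau_bilinear_Dp:
  "c * hirota_Dp (\<tau> (n + 1) m) (\<tau> n (m + 1)) xm xp - \<tau> (n + 1) m xm xp * \<tau> n (m + 1) xm xp
    + \<tau> n m xm xp * \<tau> (n + 1) (m + 1) xm xp = 0"
  unfolding hirota_Dp_def tau_mult_tau_Suc_n_Suc_m
  unfolding tau_Suc_n_split tau_Suc_m pdp_tau_Suc_n pdp_tau_Suc_m
  by (simp add: algebra_simps)

end

end

theorem lemma2:
  fixes c :: complex and cc :: "'n::finite \<Rightarrow> 'n \<Rightarrow> complex"
    and p q xi0 eta0 :: "'n \<Rightarrow> complex"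
  assumes "c \<noteq> 0"
    and "\<And>i j. p i + q j \<noteq> 0"
    and "\<And>j. q j \<noteq> 0"
    and "\<And>i. p i \<noteq> 0"
    and "\<And>i. 1 - c * p i \<noteq> 0"
    and "\<And>j. 1 + c * q j \<noteq> 0"
  shows "\<forall>(n::int) (m::int) xm xp.
    (let T = tau c cc p q xi0 eta0 in
      (1/2) * hirota_DmDp (T n m) (T n m) xm xp - T n m xm xp * T n m xm xp
        = - (T (n+1) m xm xp * T (n-1) m xm xp)
    \<and> (1/c) * hirota_Dm (T n m) (T n (m+1)) xm xp - T n m xm xp * T n (m+1) xm xp
        + T (n+1) m xm xp * T (n-1) (m+1) xm xp = 0
    \<and> c * hirota_Dp (T (n+1) m) (T n (m+1)) xm xp - T (n+1) m xm xp * T n (m+1) xm xp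
        + T n m xm xp * T (n+1) (m+1) xm xp = 0)"
proof -
  interpret gram_tau c cc p q xi0 eta0
    using assms by unfold_locales
  show ?thesis
    unfolding Let_def using tau_bilinear_DmDp tau_bilinear_Dm tau_bilinear_Dp by blast
qed

end
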